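(* Let $\rho,\psi:(0,\infty)\to(0,\infty)$ with $\int_0^1\frac{\rho(t)}{t}\,dt<\infty$, and let $\Phi,\Psi\in\bar{\mathcal{P}}_Y\cap\bar\Delta_2\cap\bar\nabla_2$. Assume that $\psi$ is almost increasing, that $r\mapsto\rho(r)/r^{n-\epsilon}$ is almost decreasing for some $\epsilon\in(0,n)$, that there exist a constant $A>0$ and $\Theta\in\bar\nabla_2$ such that for all $r\in(0,\infty)$ $$\int_0^r\frac{\rho(t)}{t}\,dt\;\Phi^{-1}(1/r^n)+\int_r^\infty\frac{\rho(t)\,\Phi^{-1}(1/t^n)}{t}\,dt\le A\,\Theta^{-1}(1/r^n),\qquad \psi(r)\,\Theta^{-1}(1/r^n)\le A\,\Psi^{-1}(1/r^n),$$ and that there is $C_\rho>0$ such that for all $r,s\in(0,\infty)$ with $\frac12\le\frac rs\le2$, $\left|\frac{\rho(r)}{r^n}-\frac{\rho(s)}{s^n}\right|\le C_\rho|r-s|\frac{\rho^*(r)}{r^{n+1}}$, where $\rho^*(r)=\int_0^r\frac{\rho(t)}{t}dt$. Then for every bounded measurable function $f$ with compact support, $I_\rho f\in L^\Psi(\mathbb{R}^n)$.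
   Context: $\bar{\mathcal{P}}$ is the set of all increasing (nondecreasing) $\Phi:[0,\infty]\to[0,\infty]$ such that, with $a(\Phi)=\sup\{t\ge0:\Phi(t)=0\}$ and $b(\Phi)=\inf\{t\ge0:\Phi(t)=\infty\}$ ($\sup\emptyset=0$, $\inf\emptyset=\infty$): $0\le a(\Phi)<\infty$, $0<b(\Phi)\le\infty$; $\lim_{t\to0+}\Phi(t)=\Phi(0)=0$; $\Phi$ is left continuous on $[0,b(\Phi))$; if $b(\Phi)=\infty$ then $\lim_{t\to\infty}\Phi(t)=\Phi(\infty)=\infty$; if $b(\Phi)<\infty$ then $\lim_{t\to b(\Phi)-0}\Phi(t)=\Phi(b(\Phi))$. Generalized inverse: $\Phi^{-1}(u)=\inf\{t\ge0:\Phi(t)>u\}$ for $u<\infty$, $\Phi^{-1}(\infty)=\infty$. A Young function is a $\Phi\in\bar{\mathcal{P}}$ convex on $[0,b(\Phi))$; $\bar{\mathcal{P}}_Y$ is the set of $\Phi\in\bar{\mathcal{P}}$ with $\Phi(t/C)\le\Psi(t)\le\Phi(Ct)$ for all $t$, for some Young function $\Psi$ and $C>0$. $\bar\Delta_2$: $\Phi\in\bar{\mathcal{P}}$ with $\Phi(2t)\le C\Phi(t)$ for all $t>0$. $\bar\nabla_2$: $\Phi\in\bar{\mathcal{P}}$ with some $k>1$ such that $\Phi(t)\le\frac1{2k}\Phi(kt)$ for all $t>0$. $L^\Psi(\mathbb{R}^n)$ is the set of measurable $g$ with $\int_{\mathbb{R}^n}\Psi(\epsilon|g(x)|)\,dx<\infty$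 for some $\epsilon>0$. Almost increasing (resp. almost decreasing) $\theta$: $\theta(r)\le C\theta(s)$ (resp. $\theta(s)\le C\theta(r)$) whenever $r<s$. $I_\rho f(x)=\int_{\mathbb{R}^n}\frac{\rho(|x-y|)}{|x-y|^n}f(y)\,dy$. Standing assumption of the paper: there are constants $C>0$ and $0<K_1<K_2$ such that $\sup_{r\le t\le2r}\rho(t)\le C\int_{K_1r}^{K_2r}\frac{\rho(t)}{t}\,dt$ for all $r>0$. *)

theory Defs
  imports "HOL-Analysis.Analysis"
begin

definition a_of :: "(ennreal \<Rightarrow> ennreal) \<Rightarrow> ennreal" where
  "a_of \<Phi> = Sup {t. \<Phi> t = 0}"

definition b_of :: "(ennreal \<Rightarrow> ennreal) \<Rightarrow> ennreal" where
  "b_of \<Phi> = Inf {t. \<Phi> t = \<infinity>}"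

definition Pbar :: "(ennreal \<Rightarrow> ennreal) set" where
  "Pbar = {\<Phi>. mono \<Phi> \<and> a_of \<Phi> < \<infinity> \<and> 0 < b_of \<Phi> \<and>
      \<Phi> 0 = 0 \<and> (\<Phi> \<longlongrightarrow> 0) (at_right 0) \<and>
      (\<forall>t. 0 < t \<and> t < b_of \<Phi> \<longrightarrow> (\<Phi> \<longlongrightarrow> \<Phi> t) (at_left t)) \<and>
      (b_of \<Phi> = \<infinity> \<longrightarrow> \<Phi> \<infinity> = \<infinity> \<and> (\<Phi> \<longlongrightarrow> \<infinity>) (at_left \<infinity>)) \<and>
      (b_of \<Phi> < \<infinity> \<longrightarrow> (\<Phi> \<longlongrightarrow> \<Phi> (b_of \<Phi>)) (at_left (b_of \<Phi>)))}"

definition ginv :: "(ennreal \<Rightarrow> ennreal) \<Rightarrow> ennreal \<Rightarrow> ennreal" where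
  "ginv \<Phi> u = (if u = \<infinity> then \<infinity> else Inf {t. \<Phi> t > u})"

definition Young :: "(ennreal \<Rightarrow> ennreal) \<Rightarrow> bool" where
  "Young \<Phi> \<longleftrightarrow> \<Phi> \<in> Pbar \<and>
     (\<forall>s t (l::ennreal). s < b_of \<Phi> \<and> t < b_of \<Phi> \<and> l \<le> 1 \<longrightarrow>
        \<Phi> (l * s + (1 - l) * t) \<le> l * \<Phi> s + (1 - l) * \<Phi> t)"

definition PbarY :: "(ennreal \<Rightarrow> ennreal) set" where
  "PbarY = {\<Phi>. \<Phi> \<in> Pbar \<and> (\<exists>\<Psi> (C::real). Young \<Psi> \<and> C > 0 \<and>
      (\<forall>t. \<Phi> (t * ennreal (1 / C)) \<le> \<Psi> t \<and> \<Psi> t \<le> \<Phi> (ennreal C * t)))}"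

definition Delta2 :: "(ennreal \<Rightarrow> ennreal) set" where
  "Delta2 = {\<Phi>. \<Phi> \<in> Pbar \<and> (\<exists>C::real. \<forall>t>0. \<Phi> (2 * t) \<le> ennreal C * \<Phi> t)}"

definition Nabla2 :: "(ennreal \<Rightarrow> ennreal) set" where
  "Nabla2 = {\<Phi>. \<Phi> \<in> Pbar \<and> (\<exists>k::real. k > 1 \<and>
      (\<forall>t>0. \<Phi> t \<le> ennreal (1 / (2 * k)) * \<Phi> (ennreal k * t)))}"

definition almost_increasing :: "(real \<Rightarrow> real) \<Rightarrow> bool" where
  "almost_increasing \<theta> \<longleftrightarrow> (\<exists>C. \<forall>r s. 0 < r \<and> r < s \<longrightarrow> \<theta> r \<le> C * \<theta> s)"

definition almost_decreasing :: "(real \<Rightarrow> real) \<Rightarrow> bool" where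
  "almost_decreasing \<theta> \<longleftrightarrow> (\<exists>C. \<forall>r s. 0 < r \<and> r < s \<longrightarrow> \<theta> s \<le> C * \<theta> r)"

text \<open>Orlicz class L^Psi on R^n (R^n = the euclidean space 'a, n = DIM('a)).\<close>
definition LPsi :: "(ennreal \<Rightarrow> ennreal) \<Rightarrow> ('a::euclidean_space \<Rightarrow> real) set" where
  "LPsi \<Psi> = {g. g \<in> borel_measurable lebesgue \<and>
      (\<exists>\<epsilon>>0. (\<integral>\<^sup>+ x. \<Psi> (ennreal (\<epsilon> * \<bar>g x\<bar>)) \<partial>lebesgue) < \<infinity>)}"

definition I_rho :: "(real \<Rightarrow> real) \<Rightarrow> ('a::euclidean_space \<Rightarrow> real) \<Rightarrow> 'a \<Rightarrow> real" where
  "I_rho \<rho> f x = (\<integral> y. \<rho> (norm (x - y)) / norm (x - y) ^ DIM('a) * f y \<partial>lebesgue)"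

definition rho_star :: "(real \<Rightarrow> real) \<Rightarrow> real \<Rightarrow> real" where
  "rho_star \<rho> r = enn2real (\<integral>\<^sup>+ t\<in>{0<..r}. ennreal (\<rho> t / t) \<partial>lborel)"

end

theory Submission
  imports Defs
begin

text \<open>With \<open>|f| \<le> M\<close> and \<open>f\<close> supported in \<open>B(0,R)\<close>, \<open>|I\<^sub>\<rho> f x|\<close> is at most \<open>M J(x)\<close>, where
  \<open>J(x)\<close> is the integral of \<open>\<rho>(|x - y|) / |x - y|^n\<close> over \<open>y \<in> B(0,R)\<close>. Near the origin \<open>J\<close> is
  bounded by the integral of the kernel over a larger ball, i.e. by a multiple of \<open>\<rho>\<^sup>*(T)\<close>, which
  is finite by the first \<open>\<Theta>\<close>-hypothesis. Far away \<open>|x - y|\<close> is comparable to \<open>|x|\<close>, and the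
  standing assumption gives \<open>J(x) \<lesssim> u \<rho>\<^sup>*(s)\<close> with \<open>s = 2 K\<^sub>2 |x|\<close> and \<open>u = s^-n\<close>. The two
  \<open>\<Theta>\<close>-hypotheses, \<open>\<psi> \<gtrsim> 1\<close> at large radii and \<open>\<Phi>^-1(u) \<gtrsim> u^q\<close> for some \<open>q < 1\<close> (from
  \<open>\<Phi> \<in> \<nabla>\<^sub>2\<close>) turn this into \<open>J(x) \<lesssim> u^(1-q) \<Psi>^-1(u)\<close>. Finally \<open>\<Psi> \<in> \<nabla>\<^sub>2\<close> gives
  \<open>\<Psi>(\<lambda> \<Psi>^-1(u)) \<lesssim> \<lambda>^p u\<close> with \<open>p > 1\<close>, so \<open>\<Psi>(\<epsilon> |I\<^sub>\<rho> f|)\<close> is bounded near the origin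
  and decays like \<open>|x|^(-n (1 + (1-q) p))\<close>, which is integrable.\<close>

lemma Pbar_mono: "\<Phi> \<in> Pbar \<Longrightarrow> mono \<Phi>"
  by (simp add: Pbar_def)

lemma Pbar_zero: "\<Phi> \<in> Pbar \<Longrightarrow> \<Phi> 0 = 0"
  by (simp add: Pbar_def)

lemma Nabla2_Pbar: "\<Phi> \<in> Nabla2 \<Longrightarrow> \<Phi> \<in> Pbar"
  by (simp add: Nabla2_def)

lemma le_ginvI:
  assumes "mono \<Phi>" "u \<noteq> \<infinity>" "\<Phi> s \<le> u"
  shows "s \<le> ginv \<Phi> u"
  unfolding ginv_def using assms
proof (simp, intro Inf_greatest, simp)
  fix t assume "u < \<Phi> t"
  show "s \<le> t"
  proof (rule ccontr)
    assume "\<not> s \<le> t"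
    then have "\<Phi> t \<le> \<Phi> s" using assms(1) by (simp add: monoD)
    then show False using \<open>u < \<Phi> t\<close> assms(3) by simp
  qed
qed

lemma less_ginvD:
  assumes "u \<noteq> \<infinity>" "s < ginv \<Phi> u"
  shows "\<Phi> s \<le> u"
proof (rule ccontr)
  assume "\<not> \<Phi> s \<le> u"
  then have "ginv \<Phi> u \<le> s" unfolding ginv_def using assms(1) by (simp add: Inf_lower)
  then show False using assms(2) by simp
qed

lemma ginv_less_top:
  assumes P: "\<Phi> \<in> Pbar" and u: "u < \<infinity>"
  shows "ginv \<Phi> u < \<infinity>"
proof -
  have "\<exists>t<\<infinity>. u < \<Phi> t"
  proof (cases "b_of \<Phi> < \<infinity>")
    case True
    then obtain b where b: "b_of \<Phi> = ennreal b" "0 \<le> b" by (cases "b_of \<Phi>") auto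
    have "Inf {t. \<Phi> t = \<infinity>} < ennreal (b + 1)" using b unfolding b_of_def by simp
    then obtain t where "\<Phi> t = \<infinity>" "t < ennreal (b + 1)" by (auto simp: Inf_less_iff)
    then show ?thesis using u
      by (intro exI[of _ t]) (auto simp: less_top[symmetric] dest: order.strict_trans)
  next
    case False
    then have "b_of \<Phi> = \<infinity>" by (simp add: less_top[symmetric])
    then have "(\<Phi> \<longlongrightarrow> \<infinity>) (at_left \<infinity>)" using P by (simp add: Pbar_def)
    then have "eventually (\<lambda>t. u < \<Phi> t) (at_left \<infinity>)" using u by (rule order_tendstoD)
    then obtain b where b: "b < \<infinity>" "\<forall>y>b. y < \<infinity> \<longrightarrow> u < \<Phi> y"
      using eventually_at_left[of 0 "\<infinity>::ennreal"] by auto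
    have "b < b + 1" "b + 1 < \<infinity>" using b by (cases b; auto)+
    then show ?thesis using b by blast
  qed
  then obtain t where t: "t < \<infinity>" "u < \<Phi> t" by blast
  then have "ginv \<Phi> u \<le> t" unfolding ginv_def using u by (auto intro: Inf_lower)
  then show ?thesis using t by simp
qed

lemma ginv_pos:
  assumes P: "\<Phi> \<in> Pbar" and u: "0 < u"
  shows "0 < ginv \<Phi> u"
proof (cases "u = \<infinity>")
  case True
  then show ?thesis by (simp add: ginv_def)
next
  case False
  have "(\<Phi> \<longlongrightarrow> 0) (at_right 0)" using P by (simp add: Pbar_def)
  then have "eventually (\<lambda>t. \<Phi> t < u) (at_right 0)" using u by (rule order_tendstoD)
  then obtain b where b: "b > 0" "\<forall>y>0. y < b \<longrightarrow> \<Phi> y < u"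
    using eventually_at_right[of 0 "1::ennreal"] by auto
  have "b \<le> ginv \<Phi> u" unfolding ginv_def using False
  proof (simp, intro Inf_greatest, simp)
    fix t assume t: "u < \<Phi> t"
    have "t \<noteq> 0" using t P by (auto simp: Pbar_def)
    then show "b \<le> t" using b t by (metis leI not_gr_zero order.asym)
  qed
  then show ?thesis using b by simp
qed

lemma Pbar_finite_near_zero:
  assumes "\<Phi> \<in> Pbar"
  obtains t0 :: real where "t0 > 0" "\<Phi> (ennreal t0) < \<infinity>"
proof -
  have "0 < b_of \<Phi>" using assms by (simp add: Pbar_def)
  then obtain z where z: "0 < z" "z < b_of \<Phi>" using dense by blast
  then obtain t0 where t0: "z = ennreal t0" "t0 > 0"
    by (cases z) (auto simp: less_top[symmetric])
  have "\<Phi> (ennreal t0) \<noteq> \<infinity>"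
  proof
    assume "\<Phi> (ennreal t0) = \<infinity>"
    then have "b_of \<Phi> \<le> ennreal t0" unfolding b_of_def by (auto intro: Inf_lower)
    then show False using z t0 by simp
  qed
  then show ?thesis using that t0 by (simp add: less_top)
qed

lemma Nabla2_iterate:
  assumes P: "\<Theta> \<in> Pbar" and k: "k > 1"
    and H: "\<forall>t>0. \<Theta> t \<le> ennreal (1 / (2 * k)) * \<Theta> (ennreal k * t)"
  shows "\<Theta> (ennreal ((1/k)^j) * v) \<le> ennreal ((1/(2*k))^j) * \<Theta> v"
proof (induction j)
  case 0
  then show ?case by simp
next
  case (Suc j)
  show ?case
  proof (cases "v = 0")
    case True
    then show ?thesis using P by (simp add: Pbar_zero)
  next
    case False
    have pos: "0 < ennreal ((1/k)^(Suc j)) * v" using False k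
      by (simp add: ennreal_zero_less_mult_iff) (simp add: zero_less_iff_neq_zero)
    have "ennreal k * (ennreal ((1/k)^(Suc j)) * v) = ennreal ((1/k)^j) * v"
      using k by (simp add: ennreal_mult'[symmetric] mult.assoc[symmetric])
    then have "\<Theta> (ennreal ((1/k)^(Suc j)) * v) \<le> ennreal (1 / (2 * k)) * \<Theta> (ennreal ((1/k)^j) * v)"
      using H pos by metis
    also have "\<dots> \<le> ennreal (1 / (2 * k)) * (ennreal ((1/(2*k))^j) * \<Theta> v)"
      by (intro mult_left_mono Suc.IH) auto
    also have "\<dots> = ennreal ((1/(2*k))^(Suc j)) * \<Theta> v"
      using k by (simp add: ennreal_mult'[symmetric] mult.assoc[symmetric])
    finally show ?thesis .
  qed
qed

lemma power_powr_ln_ratio: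
  fixes k b :: real
  assumes "k > 1" "b > 0"
  shows "((1/k)^m) powr (ln b / ln k) = (1/b)^m"
proof -
  have "ln k > 0" using assms by simp
  have "((1/k)^m) powr (ln b / ln k) = exp (ln b / ln k * ln ((1/k)^m))" using assms by (simp add: powr_def)
  also have "ln ((1/k)^m) = - (real m * ln k)" using assms by (simp add: ln_realpow ln_div)
  also have "ln b / ln k * (- (real m * ln k)) = - (real m * ln b)" using \<open>ln k > 0\<close> by simp
  also have "exp (- (real m * ln b)) = (1/b)^m" using assms
    by (simp add: exp_minus exp_of_nat_mult power_one_over inverse_eq_divide)
  finally show ?thesis .
qed

text \<open>Interpolating the geometric decay of \<open>Nabla2_iterate\<close> between the points \<open>(1/k)^j\<close>
  gives a power bound with exponent \<open>p = ln (2k) / ln k > 1\<close>.\<close>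

lemma Nabla2_powr_bound:
  assumes "\<Theta> \<in> Nabla2"
  obtains p C where "p > 1" "C > 0"
    "\<And>lam v. 0 < lam \<Longrightarrow> lam \<le> 1 \<Longrightarrow> \<Theta> (ennreal lam * v) \<le> ennreal (C * lam powr p) * \<Theta> v"
proof -
  from assms obtain k where P: "\<Theta> \<in> Pbar" and k: "k > 1"
    and H: "\<forall>t>0. \<Theta> t \<le> ennreal (1 / (2 * k)) * \<Theta> (ennreal k * t)"
    by (auto simp: Nabla2_def)
  define p where "p = ln (2*k) / ln k"
  have lnk: "ln k > 0" using k by simp
  have p1: "p > 1" unfolding p_def using k lnk by (simp add: ln_less_cancel_iff)
  have powr_p: "((1/k)^m) powr p = (1/(2*k))^m" for m :: nat
    unfolding p_def using k by (intro power_powr_ln_ratio) auto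
  have "\<Theta> (ennreal lam * v) \<le> ennreal (2 * k * lam powr p) * \<Theta> v" if l: "0 < lam" "lam \<le> 1" for lam v
  proof -
    have ex: "\<exists>j. (1/k)^j < lam" using real_arch_pow_inv[OF l(1), of "1/k"] k by simp
    define m where "m = (LEAST j. (1/k)^j < lam)"
    have m1: "(1/k)^m < lam" unfolding m_def by (rule LeastI_ex[OF ex])
    have "m \<noteq> 0" using m1 l by (intro notI) simp
    then obtain j where mj: "m = Suc j" by (cases m) auto
    have j1: "lam \<le> (1/k)^j"
      using not_less_Least[of j "\<lambda>j. (1/k)^j < lam"] mj unfolding m_def by force
    have "\<Theta> (ennreal lam * v) \<le> \<Theta> (ennreal ((1/k)^j) * v)"
      using j1 by (intro monoD[OF Pbar_mono[OF P]] mult_right_mono ennreal_leI) auto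
    also have "\<dots> \<le> ennreal ((1/(2*k))^j) * \<Theta> v" by (rule Nabla2_iterate[OF P k H])
    also have "ennreal ((1/(2*k))^j) \<le> ennreal (2 * k * lam powr p)"
    proof (rule ennreal_leI)
      have "(1/(2*k))^j = 2*k * ((1/k)^(Suc j)) powr p" using k by (simp only: powr_p) simp
      also have "((1/k)^(Suc j)) powr p \<le> lam powr p" using m1 mj p1 k
        by (intro powr_mono2) auto
      finally show "(1/(2*k))^j \<le> 2 * k * lam powr p" using k by simp
    qed
    then have "ennreal ((1/(2*k))^j) * \<Theta> v \<le> ennreal (2 * k * lam powr p) * \<Theta> v"
      by (rule mult_right_mono) simp
    finally show ?thesis .
  qed
  moreover have "2 * k > 0" using k by simp
  ultimately show ?thesis using that p1 by blast
qed

lemma Nabla2_ginv_ge_powr: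
  assumes N: "\<Phi> \<in> Nabla2"
  obtains c q u0 where "c > 0" "0 < q" "q < 1" "u0 > 0"
    "\<And>u. 0 < u \<Longrightarrow> u \<le> u0 \<Longrightarrow> ennreal (c * u powr q) \<le> ginv \<Phi> (ennreal u)"
proof -
  have P: "\<Phi> \<in> Pbar" using N by (rule Nabla2_Pbar)
  obtain p C where pC: "p > 1" "C > 0" and H: "\<And>lam v. 0 < lam \<Longrightarrow> lam \<le> 1 \<Longrightarrow>
      \<Phi> (ennreal lam * v) \<le> ennreal (C * lam powr p) * \<Phi> v"
    using Nabla2_powr_bound[OF N] by blast
  obtain t0 where t0: "t0 > 0" "\<Phi> (ennreal t0) < \<infinity>" using Pbar_finite_near_zero[OF P] by blast
  then obtain V where V: "V > 0" "\<Phi> (ennreal t0) \<le> ennreal V"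
  proof (cases "\<Phi> (ennreal t0)")
    case (real r)
    then show ?thesis using that[of "r + 1"] by simp
  qed simp
  define q where "q = 1 / p"
  define c where "c = t0 * (C * V) powr (- q)"
  have "ennreal (c * u powr q) \<le> ginv \<Phi> (ennreal u)" if u: "0 < u" "u \<le> C * V" for u
  proof -
    define lam where "lam = (u / (C * V)) powr q"
    have lam: "0 < lam" "lam \<le> 1" unfolding lam_def using u pC V q_def
      by (auto intro!: powr_le1)
    have lamp: "lam powr p = u / (C * V)" unfolding lam_def q_def using pC u V
      by (simp add: powr_powr)
    have "\<Phi> (ennreal lam * ennreal t0) \<le> ennreal (C * lam powr p) * \<Phi> (ennreal t0)"
      by (rule H[OF lam])
    also have "\<dots> \<le> ennreal (C * lam powr p) * ennreal V" by (intro mult_left_mono V) simp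
    also have "\<dots> = ennreal u" using pC V u by (simp add: lamp ennreal_mult'[symmetric])
    finally have "\<Phi> (ennreal (lam * t0)) \<le> ennreal u" using lam t0 by (simp add: ennreal_mult)
    then have "ennreal (lam * t0) \<le> ginv \<Phi> (ennreal u)"
      by (intro le_ginvI) (auto simp: Pbar_mono[OF P])
    moreover have "lam * t0 = c * u powr q" unfolding lam_def c_def using u pC V t0
      by (simp add: powr_divide powr_minus divide_simps)
    ultimately show ?thesis by simp
  qed
  moreover have "c > 0" unfolding c_def using t0 pC V by simp
  moreover have "0 < q" "q < 1" unfolding q_def using pC by auto
  moreover have "C * V > 0" using pC V by simp
  ultimately show ?thesis using that by blast
qed

text \<open>Since \<open>\<Psi> (G/2) \<le> u\<close> for \<open>G = ginv \<Psi> u\<close>, the power bound of \<open>\<Psi>\<close> applies at \<open>G/2\<close>.\<close>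

lemma Nabla2_scaled_ginv_le:
  assumes N: "\<Psi> \<in> Nabla2"
  obtains p C where "p > 1" "C > 0"
    "\<And>u lam. 0 \<le> u \<Longrightarrow> 0 < lam \<Longrightarrow> lam \<le> 1/2 \<Longrightarrow>
       \<Psi> (ennreal lam * ginv \<Psi> (ennreal u)) \<le> ennreal (C * (2 * lam) powr p * u)"
proof -
  have P: "\<Psi> \<in> Pbar" using N by (rule Nabla2_Pbar)
  obtain p C where pC: "p > 1" "C > 0" and H: "\<And>lam v. 0 < lam \<Longrightarrow> lam \<le> 1 \<Longrightarrow>
      \<Psi> (ennreal lam * v) \<le> ennreal (C * lam powr p) * \<Psi> v"
    using Nabla2_powr_bound[OF N] by blast
  have "\<Psi> (ennreal lam * ginv \<Psi> (ennreal u)) \<le> ennreal (C * (2 * lam) powr p * u)"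
    if u: "0 \<le> u" and lam: "0 < lam" "lam \<le> 1/2" for u lam
  proof -
    obtain G where G: "ginv \<Psi> (ennreal u) = ennreal G" "G \<ge> 0"
      using ginv_less_top[OF P, of "ennreal u"] by (cases "ginv \<Psi> (ennreal u)") auto
    show ?thesis
    proof (cases "G = 0")
      case True
      then show ?thesis using G Pbar_zero[OF P] by simp
    next
      case False
      then have "ennreal (G/2) < ginv \<Psi> (ennreal u)" using G by (simp add: ennreal_less_iff)
      then have half: "\<Psi> (ennreal (G/2)) \<le> ennreal u" by (intro less_ginvD) simp
      have "ennreal lam * ennreal G = ennreal (2 * lam) * ennreal (G/2)"
        using G lam by (simp add: ennreal_mult[symmetric])
      then have "\<Psi> (ennreal lam * ginv \<Psi> (ennreal u)) = \<Psi> (ennreal (2 * lam) * ennreal (G/2))"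
        using G by simp
      also have "\<dots> \<le> ennreal (C * (2 * lam) powr p) * \<Psi> (ennreal (G/2))"
        using lam by (intro H) auto
      also have "\<dots> \<le> ennreal (C * (2 * lam) powr p) * ennreal u"
        using half by (rule mult_left_mono) simp
      also have "\<dots> = ennreal (C * (2 * lam) powr p * u)"
        using pC u by (simp add: ennreal_mult[symmetric])
      finally show ?thesis .
    qed
  qed
  then show ?thesis using that pC by blast
qed

text \<open>The library's \<open>measure_eqI_lessThan\<close> compares the rays \<open>{x<..}\<close>, which have infinite
  measure for the distribution of \<open>norm\<close>; here the rays \<open>{..<x}\<close> are used instead.\<close>

lemma measure_eqI_Iio:
  fixes M N :: "real measure"
  assumes sets: "sets M = sets borel" "sets N = sets borel"
  assumes fin: "\<And>x. emeasure M {..<x} < \<infinity>"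
  assumes eq: "\<And>x. emeasure M {..<x} = emeasure N {..<x}"
  shows "M = N"
proof (rule measure_eqI_generator_eq_countable)
  let ?LT = "\<lambda>a::real. {..<a}" let ?E = "range ?LT"
  show "Int_stable ?E"
  proof (clarsimp simp: Int_stable_def)
    fix a b :: real
    have "{..<a} \<inter> {..<b} = {..<min a b}" by auto
    then show "{..<a} \<inter> {..<b} \<in> ?E" by blast
  qed
  show "?E \<subseteq> Pow UNIV" "sets M = sigma_sets UNIV ?E" "sets N = sigma_sets UNIV ?E"
    unfolding sets borel_Iio by auto
  show "(\<Union>i\<in>Rats. ?LT i) = UNIV"
  proof safe
    fix x :: real
    obtain r where "r \<in> \<rat>" "x < r" using Rats_dense_in_real[of x "x + 1"] by auto
    then show "x \<in> (\<Union>i\<in>Rats. ?LT i)" by auto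
  qed auto
  show "?LT`Rats \<subseteq> ?E" "\<And>a. a \<in> ?LT`Rats \<Longrightarrow> emeasure M a \<noteq> \<infinity>"
    using fin by (auto simp: less_top)
qed (auto intro: eq countable_rat)

lemma emeasure_ball_zero:
  "emeasure lborel (ball (0::'a::euclidean_space) r) =
     ennreal (max r 0 ^ DIM('a) * measure lborel (ball (0::'a) 1))"
proof (cases "r \<le> 0")
  case True
  then have "emeasure lborel (ball (0::'a) r) = 0" by (metis ball_empty emeasure_empty)
  then show ?thesis using True by (simp add: zero_power DIM_positive)
next
  case False
  then show ?thesis
    using emeasure_lborel_ball_finite[of "0::'a" r] content_ball_conv_unit_ball[of r "0::'a"]
    by (simp add: emeasure_eq_ennreal_measure)
qed

lemma emeasure_density_power_lessThan:
  fixes n :: nat and V a :: real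
  assumes n: "n \<ge> 1" and V: "V \<ge> 0"
  shows "emeasure (density lborel (\<lambda>t. ennreal (real n * V * t ^ (n - 1)) * indicator {0<..} t)) {..<a}
    = ennreal (max a 0 ^ n * V)"
proof -
  define D where "D = (\<lambda>t::real. ennreal (real n * V * t ^ (n - 1)) * indicator {0<..} t)"
  have "emeasure (density lborel D) {..<a} = (\<integral>\<^sup>+ t. D t * indicator {..<a} t \<partial>lborel)"
    unfolding D_def by (subst emeasure_density) auto
  also have "\<dots> = ennreal (max a 0 ^ n * V)"
  proof (cases "a \<le> 0")
    case True
    then have "(\<integral>\<^sup>+ t. D t * indicator {..<a} t \<partial>lborel) = (\<integral>\<^sup>+ (t::real). 0 \<partial>lborel)"
      by (intro nn_integral_cong) (auto simp: D_def split: split_indicator)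
    then show ?thesis using True n by (simp add: zero_power)
  next
    case False
    have "AE t in lborel. t \<noteq> 0" "AE t in lborel. t \<noteq> a" by (rule AE_lborel_singleton)+
    then have "(\<integral>\<^sup>+ t. D t * indicator {..<a} t \<partial>lborel)
        = (\<integral>\<^sup>+ t. ennreal (real n * V * t ^ (n - 1)) * indicator {0..a} t \<partial>lborel)"
      by (intro nn_integral_cong_AE, eventually_elim) (auto simp: D_def split: split_indicator)
    also have "\<dots> = ennreal (V * a ^ n - V * 0 ^ n)"
    proof (rule nn_integral_FTC_Icc)
      fix t :: real assume "t \<in> {0..a}"
      then show "0 \<le> real n * V * t ^ (n - 1)" using V by simp
      show "((\<lambda>t. V * t ^ n) has_real_derivative real n * V * t ^ (n - 1)) (at t)"
        by (auto intro!: derivative_eq_intros)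
    qed (use False in auto)
    finally show ?thesis using False n by (simp add: mult.commute zero_power)
  qed
  finally show ?thesis unfolding D_def .
qed

text \<open>Polar coordinates: both measures give \<open>{..<a}\<close> the mass \<open>\<omega>\<^sub>n a^n\<close>.\<close>

lemma distr_norm_lborel:
  "distr lborel borel (norm :: 'a::euclidean_space \<Rightarrow> real) = density lborel
     (\<lambda>t. ennreal (real DIM('a) * measure lborel (ball (0::'a) 1) * t ^ (DIM('a) - 1)) * indicator {0<..} t)"
proof (rule measure_eqI_Iio)
  fix a :: real
  have "(norm :: 'a \<Rightarrow> real) -` {..<a} = ball 0 a" by auto
  then have mass: "emeasure (distr lborel borel (norm :: 'a \<Rightarrow> real)) {..<a} =
      ennreal (max a 0 ^ DIM('a) * measure lborel (ball (0::'a) 1))"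
    by (subst emeasure_distr) (auto simp: emeasure_ball_zero)
  then show "emeasure (distr lborel borel (norm :: 'a \<Rightarrow> real)) {..<a} < \<infinity>" by simp
  show "emeasure (distr lborel borel (norm :: 'a \<Rightarrow> real)) {..<a} = emeasure (density lborel
      (\<lambda>t. ennreal (real DIM('a) * measure lborel (ball (0::'a) 1) * t ^ (DIM('a) - 1)) * indicator {0<..} t)) {..<a}"
    unfolding mass by (rule emeasure_density_power_lessThan[symmetric]) (simp_all add: Suc_le_eq)
qed simp_all

lemma nn_integral_radial:
  fixes F :: "real \<Rightarrow> ennreal"
  assumes [measurable]: "F \<in> borel_measurable borel"
  shows "(\<integral>\<^sup>+z. F (norm (z::'a::euclidean_space)) \<partial>lborel) =
     (\<integral>\<^sup>+t. ennreal (real DIM('a) * measure lborel (ball (0::'a) 1) * t ^ (DIM('a) - 1))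
              * indicator {0<..} t * F t \<partial>lborel)"
proof -
  have "(\<integral>\<^sup>+z. F (norm (z::'a)) \<partial>lborel) = integral\<^sup>N (distr lborel borel (norm :: 'a \<Rightarrow> real)) F"
    by (subst nn_integral_distr) auto
  then show ?thesis unfolding distr_norm_lborel by (subst (asm) nn_integral_density) auto
qed

lemma nn_integral_radial_decay_finite:
  fixes r0 B C \<beta> :: real
  assumes r0: "r0 > 0" and B: "B \<ge> 0" and C: "C \<ge> 0" and \<beta>: "\<beta> > DIM('a)"
  shows "(\<integral>\<^sup>+x. ennreal (if norm x < r0 then B else C * norm x powr (-\<beta>))
    \<partial>(lborel :: 'a::euclidean_space measure)) < \<infinity>"
proof -
  define n where "n = DIM('a)"
  define c where "c = real n * measure lborel (ball (0::'a) 1)"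
  define W where "W = (\<lambda>t::real. ennreal (if t < r0 then B else C * t powr (-\<beta>)))"
  have c: "c \<ge> 0" unfolding c_def by simp
  have n1: "n \<ge> 1" unfolding n_def using DIM_positive by (simp add: Suc_le_eq)
  have [measurable]: "W \<in> borel_measurable borel" unfolding W_def by measurable
  have tail: "(\<integral>\<^sup>+ t. ennreal (t powr (n - 1 - \<beta>)) * indicator {r0..} t \<partial>lborel) < \<infinity>"
    using \<beta> r0 unfolding n_def
    by (subst nn_integral_has_integral_lebesgue'[OF _ has_integral_powr_to_inf]) auto
  have "(\<integral>\<^sup>+x. W (norm (x::'a)) \<partial>lborel) =
      (\<integral>\<^sup>+ t. ennreal (c * t ^ (n - 1)) * indicator {0<..} t * W t \<partial>lborel)"
    unfolding c_def n_def by (rule nn_integral_radial) measurable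
  also have "\<dots> \<le> (\<integral>\<^sup>+ t. ennreal (c * r0 ^ (n - 1) * B) * indicator {0..r0} t
      + ennreal (c * C) * (ennreal (t powr (n - 1 - \<beta>)) * indicator {r0..} t) \<partial>lborel)"
  proof (rule nn_integral_mono)
    fix t :: real
    consider "t \<le> 0" | "0 < t" "t < r0" | "r0 \<le> t" by linarith
    then show "ennreal (c * t ^ (n - 1)) * indicator {0<..} t * W t \<le>
        ennreal (c * r0 ^ (n - 1) * B) * indicator {0..r0} t
        + ennreal (c * C) * (ennreal (t powr (n - 1 - \<beta>)) * indicator {r0..} t)"
    proof cases
      case 2
      have "c * t ^ (n - 1) * B \<le> c * r0 ^ (n - 1) * B"
        using 2 c B by (intro mult_right_mono mult_left_mono power_mono) auto
      then show ?thesis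
        using 2 c B unfolding W_def by (simp add: ennreal_mult[symmetric] ennreal_leI add_increasing2)
    next
      case 3
      have "t ^ (n - 1) * t powr (-\<beta>) = t powr (n - 1 - \<beta>)"
        using 3 r0 n1 by (simp add: powr_realpow[symmetric] powr_add[symmetric] of_nat_diff)
      then have "ennreal (c * t ^ (n - 1)) * W t = ennreal (c * C) * ennreal (t powr (n - 1 - \<beta>))"
        using 3 r0 c C unfolding W_def by (simp add: ennreal_mult[symmetric] mult_ac)
      then show ?thesis using 3 r0 by (simp add: add_increasing)
    qed (simp add: add_increasing)
  qed
  also have "\<dots> = ennreal (c * r0 ^ (n - 1) * B) * emeasure lborel {0..r0}
      + ennreal (c * C) * (\<integral>\<^sup>+ t. ennreal (t powr (n - 1 - \<beta>)) * indicator {r0..} t \<partial>lborel)"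
    by (subst nn_integral_add) (auto simp: nn_integral_cmult_indicator nn_integral_cmult)
  also have "\<dots> < \<infinity>" using tail r0 by (simp add: ennreal_mult_less_top)
  finally show ?thesis unfolding W_def .
qed

lemma inverse_power_powr:
  fixes a t e :: real
  assumes "a > 0" "t > 0"
  shows "(1 / (a * t) ^ n) powr e = a powr (- (n * e)) * t powr (- (n * e))"
proof -
  have "1 / (a * t) ^ n = (a * t) powr (- real n)"
    using assms by (simp add: powr_minus_divide powr_realpow)
  then show ?thesis using assms by (simp add: powr_powr powr_mult[symmetric])
qed

lemma LPsi_of_radial_majorant:
  fixes g :: "'a::euclidean_space \<Rightarrow> real" and r0 B C \<beta> :: real
  assumes g: "g \<in> borel_measurable lebesgue" and \<epsilon>: "\<epsilon> > 0"
    and r0: "r0 > 0" and B: "B \<ge> 0" and C: "C \<ge> 0" and \<beta>: "\<beta> > DIM('a)"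
    and majorant: "\<And>x. \<Psi> (ennreal (\<epsilon> * \<bar>g x\<bar>)) \<le> ennreal (if norm x < r0 then B else C * norm x powr (- \<beta>))"
  shows "g \<in> LPsi \<Psi>"
proof -
  have "(\<integral>\<^sup>+x. \<Psi> (ennreal (\<epsilon> * \<bar>g x\<bar>)) \<partial>lebesgue)
      \<le> (\<integral>\<^sup>+x. ennreal (if norm (x::'a) < r0 then B else C * norm x powr (- \<beta>)) \<partial>lebesgue)"
    by (intro nn_integral_mono majorant)
  also have "\<dots> = (\<integral>\<^sup>+x. ennreal (if norm (x::'a) < r0 then B else C * norm x powr (- \<beta>)) \<partial>lborel)"
    by (rule nn_integral_completion) measurable
  also have "\<dots> < \<infinity>" using r0 B C \<beta> by (rule nn_integral_radial_decay_finite)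
  finally show ?thesis unfolding LPsi_def using g \<epsilon> by blast
qed

text \<open>A value dominated by \<open>K u^(1-q) \<Psi>^-1(u)\<close> is \<open>\<lambda> \<Psi>^-1(u)\<close> with \<open>\<lambda> \<lesssim> u^(1-q)\<close> after scaling by
  \<open>\<epsilon>\<close>, so \<open>Nabla2_scaled_ginv_le\<close> applies.\<close>

lemma Nabla2_Psi_le_of_ginv_bound:
  assumes N: "\<Psi> \<in> Nabla2"
  obtains p C where "p > 1" "C > 0"
    "\<And>\<epsilon> K q u u1 v. 0 < \<epsilon> \<Longrightarrow> 0 \<le> K \<Longrightarrow> q \<le> 1 \<Longrightarrow> 0 < u \<Longrightarrow> u \<le> u1 \<Longrightarrow>
      \<epsilon> \<le> 1 / (2 * (K + 1) * u1 powr (1 - q)) \<Longrightarrow> 0 \<le> v \<Longrightarrow>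
      ennreal v \<le> ennreal (K * u powr (1 - q)) * ginv \<Psi> (ennreal u) \<Longrightarrow>
      \<Psi> (ennreal (\<epsilon> * v)) \<le> ennreal (C * (2 * \<epsilon> * (K + 1)) powr p * u powr ((1 - q) * p + 1))"
proof -
  obtain p C where pC: "p > 1" "C > 0" and scaled: "\<And>u lam. 0 \<le> u \<Longrightarrow> 0 < lam \<Longrightarrow> lam \<le> 1/2 \<Longrightarrow>
      \<Psi> (ennreal lam * ginv \<Psi> (ennreal u)) \<le> ennreal (C * (2 * lam) powr p * u)"
    using Nabla2_scaled_ginv_le[OF N] by blast
  have "\<Psi> (ennreal (\<epsilon> * v)) \<le> ennreal (C * (2 * \<epsilon> * (K + 1)) powr p * u powr ((1 - q) * p + 1))"
    if \<epsilon>: "0 < \<epsilon>" and K: "0 \<le> K" and q: "q \<le> 1" and u: "0 < u" "u \<le> u1"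
      and \<epsilon>_small: "\<epsilon> \<le> 1 / (2 * (K + 1) * u1 powr (1 - q))"
      and "0 \<le> v" and v: "ennreal v \<le> ennreal (K * u powr (1 - q)) * ginv \<Psi> (ennreal u)" for \<epsilon> K q u u1 v
  proof -
    define lam where "lam = \<epsilon> * (K + 1) * u powr (1 - q)"
    have "lam \<le> \<epsilon> * ((K + 1) * u1 powr (1 - q))"
      unfolding lam_def using \<epsilon> K u q by (simp add: mult.assoc mult_left_mono powr_mono2)
    also have "\<dots> \<le> 1 / (2 * (K + 1) * u1 powr (1 - q)) * ((K + 1) * u1 powr (1 - q))"
      using \<epsilon>_small K by (intro mult_right_mono) simp_all
    also have "\<dots> = 1/2" using K u by simp
    finally have lam: "lam > 0" "lam \<le> 1/2" using \<epsilon> K u unfolding lam_def by auto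
    have "ennreal (\<epsilon> * v) \<le> ennreal \<epsilon> * (ennreal (K * u powr (1 - q)) * ginv \<Psi> (ennreal u))"
      using v \<epsilon> \<open>0 \<le> v\<close> by (simp add: ennreal_mult mult_left_mono)
    also have "\<dots> \<le> ennreal lam * ginv \<Psi> (ennreal u)"
      unfolding lam_def mult.assoc[symmetric] using \<epsilon> K u
      by (intro mult_right_mono) (auto simp: ennreal_mult[symmetric] intro!: ennreal_leI mult_right_mono)
    finally have "\<Psi> (ennreal (\<epsilon> * v)) \<le> \<Psi> (ennreal lam * ginv \<Psi> (ennreal u))"
      by (rule monoD[OF Pbar_mono[OF Nabla2_Pbar[OF N]]])
    also have "\<dots> \<le> ennreal (C * (2 * lam) powr p * u)" using u lam by (intro scaled) auto
    also have "C * (2 * lam) powr p * u = C * (2 * \<epsilon> * (K + 1)) powr p * u powr ((1 - q) * p + 1)"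
      unfolding lam_def using \<epsilon> K u by (simp add: powr_mult powr_powr powr_add mult.assoc)
    finally show ?thesis .
  qed
  then show ?thesis using that pC by blast
qed

text \<open>The far-field bound makes \<open>\<Psi>(\<epsilon> |g x|)\<close> decay like \<open>u^(1 + (1-q) p)\<close>, which is integrable at
  infinity because \<open>(1-q) p > 0\<close>.\<close>

lemma LPsi_of_decay:
  fixes g :: "'a::euclidean_space \<Rightarrow> real"
  assumes g: "g \<in> borel_measurable lebesgue" and N: "\<Psi> \<in> Nabla2"
    and q: "q < 1" and a: "a > 0" and r0: "r0 > 0" and K: "K \<ge> 0"
    and near: "\<And>x. norm x < r0 \<Longrightarrow> \<bar>g x\<bar> \<le> B"
    and far: "\<And>x. norm x \<ge> r0 \<Longrightarrow> ennreal \<bar>g x\<bar> \<le>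
      ennreal (K * (1 / (a * norm x) ^ DIM('a)) powr (1 - q)) * ginv \<Psi> (ennreal (1 / (a * norm x) ^ DIM('a)))"
  shows "g \<in> LPsi \<Psi>"
proof -
  define n where "n = DIM('a)"
  have P: "\<Psi> \<in> Pbar" using N by (rule Nabla2_Pbar)
  obtain p C where pC: "p > 1" "C > 0" and decay: "\<And>\<epsilon> K q u u1 v. 0 < \<epsilon> \<Longrightarrow> 0 \<le> K \<Longrightarrow> q \<le> 1 \<Longrightarrow>
      0 < u \<Longrightarrow> u \<le> u1 \<Longrightarrow> \<epsilon> \<le> 1 / (2 * (K + 1) * u1 powr (1 - q)) \<Longrightarrow> 0 \<le> v \<Longrightarrow>
      ennreal v \<le> ennreal (K * u powr (1 - q)) * ginv \<Psi> (ennreal u) \<Longrightarrow>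
      \<Psi> (ennreal (\<epsilon> * v)) \<le> ennreal (C * (2 * \<epsilon> * (K + 1)) powr p * u powr ((1 - q) * p + 1))"
    using Nabla2_Psi_le_of_ginv_bound[OF N] by blast
  obtain t1 where t1: "t1 > 0" "\<Psi> (ennreal t1) < \<infinity>"
    using Pbar_finite_near_zero[OF P] by blast
  then obtain \<Psi>1 where \<Psi>1: "\<Psi> (ennreal t1) = ennreal \<Psi>1" "\<Psi>1 \<ge> 0"
    by (cases "\<Psi> (ennreal t1)") auto
  define B' where "B' = max B 0"
  define u1 where "u1 = 1 / (a * r0) ^ n"
  have u1: "u1 > 0" unfolding u1_def using a r0 by simp
  define \<epsilon> where "\<epsilon> = min (t1 / (B' + 1)) (1 / (2 * (K + 1) * u1 powr (1 - q)))"
  have \<epsilon>: "\<epsilon> > 0" unfolding \<epsilon>_def B'_def using t1 K u1 by simp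
  define \<beta> where "\<beta> = n * ((1 - q) * p + 1)"
  define C' where "C' = C * (2 * \<epsilon> * (K + 1)) powr p * a powr (- \<beta>)"
  have Psi_near: "\<Psi> (ennreal (\<epsilon> * \<bar>g x\<bar>)) \<le> ennreal \<Psi>1" if x: "norm x < r0" for x
  proof -
    have "\<epsilon> * \<bar>g x\<bar> \<le> t1 / (B' + 1) * B'"
      using near[OF x] \<epsilon> unfolding \<epsilon>_def B'_def by (intro mult_mono) auto
    also have "\<dots> \<le> t1" using t1 unfolding B'_def by (simp add: field_simps)
    finally show ?thesis
      using \<Psi>1 by (metis monoD[OF Pbar_mono[OF P]] ennreal_leI)
  qed
  have Psi_far: "\<Psi> (ennreal (\<epsilon> * \<bar>g x\<bar>)) \<le> ennreal (C' * norm x powr (- \<beta>))"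
    if x: "norm x \<ge> r0" for x
  proof -
    define u where "u = 1 / (a * norm x) ^ n"
    have "norm x > 0" using x r0 by linarith
    then have u: "u > 0" "u \<le> u1" unfolding u_def u1_def using x a r0
      by (auto intro!: divide_left_mono power_mono mult_left_mono mult_pos_pos)
    have "ennreal \<bar>g x\<bar> \<le> ennreal (K * u powr (1 - q)) * ginv \<Psi> (ennreal u)"
      using far[OF x] unfolding u_def n_def .
    then have "\<Psi> (ennreal (\<epsilon> * \<bar>g x\<bar>)) \<le> ennreal (C * (2 * \<epsilon> * (K + 1)) powr p * u powr ((1 - q) * p + 1))"
      using q by (intro decay[OF \<epsilon> K _ u]) (simp_all add: \<epsilon>_def)
    also have "u powr ((1 - q) * p + 1) = a powr (- \<beta>) * norm x powr (- \<beta>)"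
      unfolding u_def \<beta>_def using a \<open>norm x > 0\<close> by (rule inverse_power_powr)
    finally show ?thesis unfolding C'_def by (simp add: mult_ac)
  qed
  show ?thesis
  proof (rule LPsi_of_radial_majorant[OF g \<epsilon> r0 \<Psi>1(2)])
    show "C' \<ge> 0" unfolding C'_def using pC by simp
    show "\<beta> > DIM('a)" unfolding \<beta>_def n_def using q pC by (simp add: mult_pos_pos)
    show "\<Psi> (ennreal (\<epsilon> * \<bar>g x\<bar>)) \<le> ennreal (if norm x < r0 then \<Psi>1 else C' * norm x powr (- \<beta>))" for x
      using Psi_near Psi_far by (simp add: not_less)
  qed
qed

text \<open>The paper's \<open>\<rho>\<^sup>*\<close> as an extended real, before the conversion made by \<open>rho_star\<close>.\<close>

definition rho_star_nn :: "(real \<Rightarrow> real) \<Rightarrow> real \<Rightarrow> ennreal" where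
  "rho_star_nn \<rho> r = (\<integral>\<^sup>+ t\<in>{0<..r}. ennreal (\<rho> t / t) \<partial>lborel)"

lemma rho_star_nn_mono: "r \<le> s \<Longrightarrow> rho_star_nn \<rho> r \<le> rho_star_nn \<rho> s"
  unfolding rho_star_nn_def by (intro nn_integral_mono) (auto split: split_indicator)

lemma rho_le_rho_star_nn:
  assumes K1: "0 < K1"
    and standing: "\<forall>r>0. \<forall>t\<in>{r..2*r}. ennreal (\<rho> t) \<le>
      ennreal C * (\<integral>\<^sup>+ s\<in>{K1*r..K2*r}. ennreal (\<rho> s / s) \<partial>lborel)"
    and t: "t > 0"
  shows "ennreal (\<rho> t) \<le> ennreal C * rho_star_nn \<rho> (K2 * t)"
proof -
  have "ennreal (\<rho> t) \<le> ennreal C * (\<integral>\<^sup>+ s\<in>{K1*t..K2*t}. ennreal (\<rho> s / s) \<partial>lborel)"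
    using standing t by auto
  also have "\<dots> \<le> ennreal C * rho_star_nn \<rho> (K2 * t)"
    unfolding rho_star_nn_def using K1 t
    by (intro mult_left_mono nn_integral_mono)
      (auto split: split_indicator dest: less_le_trans[OF mult_pos_pos[OF K1 t]])
  finally show ?thesis .
qed

lemma rho_star_nn_less_top:
  assumes "\<Phi> \<in> Pbar" "\<Theta> \<in> Pbar" "r > 0"
    and bound: "rho_star_nn \<rho> r * ginv \<Phi> (ennreal (1 / r ^ n)) \<le> ennreal A * ginv \<Theta> (ennreal (1 / r ^ n))"
  shows "rho_star_nn \<rho> r < \<infinity>"
proof -
  have "ennreal A * ginv \<Theta> (ennreal (1 / r ^ n)) < \<infinity>"
    using ginv_less_top[OF assms(2)] by (simp add: ennreal_mult_less_top)
  then have "rho_star_nn \<rho> r * ginv \<Phi> (ennreal (1 / r ^ n)) < \<infinity>"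
    using bound by (rule le_less_trans[rotated])
  moreover have "0 < ginv \<Phi> (ennreal (1 / r ^ n))" using assms(1,3) by (intro ginv_pos) simp_all
  ultimately show ?thesis by (auto simp: ennreal_mult_less_top top.not_eq_extremum)
qed

lemma almost_increasing_ge_pos:
  assumes ai: "almost_increasing \<psi>" and pos: "\<forall>t>0. \<psi> t > 0" and r: "r > 0"
  obtains \<psi>0 where "\<psi>0 > 0" "\<And>s. s > r \<Longrightarrow> \<psi>0 \<le> \<psi> s"
proof -
  obtain C where C: "\<And>r s. 0 < r \<Longrightarrow> r < s \<Longrightarrow> \<psi> r \<le> C * \<psi> s"
    using ai unfolding almost_increasing_def by blast
  have "\<psi> r \<le> C * \<psi> (r + 1)" "\<psi> r > 0" "\<psi> (r + 1) > 0" using C[of r "r + 1"] pos r by auto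
  then have "C > 0" by (metis mult_nonpos_nonneg not_less order.strict_trans1 less_imp_le)
  then show ?thesis
    using that[of "\<psi> r / C"] C pos r by (auto simp: pos_divide_le_eq mult.commute)
qed

lemma rho_star_nn_le_ginv_pointwise:
  assumes \<psi>0: "0 < \<psi>0" "\<psi>0 \<le> \<psi> s" and c: "0 < c" and u: "0 < u" and A: "0 \<le> A"
    and \<Phi>_low: "ennreal (c * u powr q) \<le> ginv \<Phi> (ennreal u)"
    and \<Phi>\<Theta>: "rho_star_nn \<rho> s * ginv \<Phi> (ennreal u) \<le> ennreal A * ginv \<Theta> (ennreal u)"
    and \<Theta>\<Psi>: "ennreal (\<psi> s) * ginv \<Theta> (ennreal u) \<le> ennreal A * ginv \<Psi> (ennreal u)"
  shows "ennreal u * rho_star_nn \<rho> s \<le> ennreal (A\<^sup>2 / (\<psi>0 * c) * u powr (1 - q)) * ginv \<Psi> (ennreal u)"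
proof -
  define K where "K = A\<^sup>2 / (\<psi>0 * c)"
  have K: "K \<ge> 0" unfolding K_def using \<psi>0 c by simp
  have "ennreal (\<psi>0 * (c * u powr q)) * rho_star_nn \<rho> s
      = ennreal \<psi>0 * (ennreal (c * u powr q) * rho_star_nn \<rho> s)"
    using \<psi>0 c u by (simp add: ennreal_mult mult.assoc)
  also have "\<dots> \<le> ennreal (\<psi> s) * (ginv \<Phi> (ennreal u) * rho_star_nn \<rho> s)"
    using \<psi>0 \<Phi>_low by (intro mult_mono ennreal_leI) auto
  also have "\<dots> \<le> ennreal (\<psi> s) * (ennreal A * ginv \<Theta> (ennreal u))"
    using \<Phi>\<Theta> by (intro mult_left_mono) (auto simp: mult.commute)
  also have "\<dots> \<le> ennreal A * (ennreal A * ginv \<Psi> (ennreal u))"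
    using \<Theta>\<Psi> unfolding mult.left_commute[of "ennreal (\<psi> s)"] by (intro mult_left_mono) auto
  also have "\<dots> = ennreal (\<psi>0 * (c * u powr q)) * (ennreal (K * u powr (- q)) * ginv \<Psi> (ennreal u))"
  proof -
    have "\<psi>0 * (c * u powr q) * (K * u powr (- q)) = A * A"
      unfolding K_def using \<psi>0 c u by (simp add: powr_minus power2_eq_square field_simps)
    then have "ennreal (\<psi>0 * (c * u powr q)) * ennreal (K * u powr (- q)) = ennreal A * ennreal A"
      using \<psi>0 c u K A by (simp add: ennreal_mult[symmetric])
    then show ?thesis by (metis mult.assoc)
  qed
  finally have "rho_star_nn \<rho> s \<le> ennreal (K * u powr (- q)) * ginv \<Psi> (ennreal u)"
    using \<psi>0 c u by (subst (asm) ennreal_mult_le_mult_iff) auto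
  then have "ennreal u * rho_star_nn \<rho> s \<le> ennreal u * (ennreal (K * u powr (- q)) * ginv \<Psi> (ennreal u))"
    by (rule mult_left_mono) simp
  also have "\<dots> = ennreal (u * (K * u powr (- q))) * ginv \<Psi> (ennreal u)"
    using u K by (simp add: ennreal_mult mult.assoc)
  also have "u * (K * u powr (- q)) = K * u powr (1 - q)"
    using u by (simp add: powr_diff powr_minus field_simps)
  finally show ?thesis unfolding K_def .
qed

text \<open>At large radii \<open>\<psi> \<ge> \<psi>\<^sub>0 > 0\<close>, and \<open>u = s^-n\<close> is small enough for \<open>\<Phi>^-1(u) \<ge> c u^q\<close>.\<close>

lemma rho_star_nn_le_ginv:
  fixes n :: nat
  assumes n: "n \<ge> 1" and A: "A > 0" and N: "\<Phi> \<in> Nabla2"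
    and \<psi>_pos: "\<forall>t>0. \<psi> t > 0" and \<psi>_ai: "almost_increasing \<psi>"
    and \<Phi>\<Theta>: "\<And>r. r > 0 \<Longrightarrow>
      rho_star_nn \<rho> r * ginv \<Phi> (ennreal (1 / r ^ n)) \<le> ennreal A * ginv \<Theta> (ennreal (1 / r ^ n))"
    and \<Theta>\<Psi>: "\<And>r. r > 0 \<Longrightarrow>
      ennreal (\<psi> r) * ginv \<Theta> (ennreal (1 / r ^ n)) \<le> ennreal A * ginv \<Psi> (ennreal (1 / r ^ n))"
  obtains K q s0 where "K \<ge> 0" "q < 1"
    "\<And>s. s \<ge> s0 \<Longrightarrow> ennreal (1 / s ^ n) * rho_star_nn \<rho> s \<le>
       ennreal (K * (1 / s ^ n) powr (1 - q)) * ginv \<Psi> (ennreal (1 / s ^ n))"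
proof -
  obtain c q u0 where cq: "c > 0" "0 < q" "q < 1" "u0 > 0" and
    \<Phi>_low: "\<And>u. 0 < u \<Longrightarrow> u \<le> u0 \<Longrightarrow> ennreal (c * u powr q) \<le> ginv \<Phi> (ennreal u)"
    using Nabla2_ginv_ge_powr[OF N] by blast
  obtain \<psi>0 where \<psi>0: "\<psi>0 > 0" "\<And>s. s > 1 \<Longrightarrow> \<psi>0 \<le> \<psi> s"
    using almost_increasing_ge_pos[OF \<psi>_ai \<psi>_pos, of 1] by auto
  have "ennreal (1 / s ^ n) * rho_star_nn \<rho> s \<le>
      ennreal (A\<^sup>2 / (\<psi>0 * c) * (1 / s ^ n) powr (1 - q)) * ginv \<Psi> (ennreal (1 / s ^ n))"
    if s: "s \<ge> max 2 (1 / u0)" for s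
  proof (rule rho_star_nn_le_ginv_pointwise[OF \<psi>0(1) _ cq(1) _ _ \<Phi>_low \<Phi>\<Theta> \<Theta>\<Psi>])
    have "s > 1" "1 / u0 \<le> s" using s by auto
    then have "1 \<le> u0 * s" using cq by (simp add: divide_le_eq mult.commute)
    also have "\<dots> \<le> u0 * s ^ n"
      using \<open>s > 1\<close> n cq by (intro mult_left_mono) (auto intro: order_trans[OF _ power_increasing[of 1]])
    finally show "1 / s ^ n \<le> u0" using \<open>s > 1\<close> by (simp add: divide_le_eq mult.commute)
  qed (use s \<psi>0 A in auto)
  moreover have "A\<^sup>2 / (\<psi>0 * c) \<ge> 0" using \<psi>0 cq by simp
  ultimately show ?thesis using that cq by blast
qed

text \<open>At \<open>z = 0\<close> the division by \<open>0\<close> makes the kernel \<open>0\<close>, so the value \<open>\<rho> 0\<close> never matters.\<close>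

definition rho_kernel :: "(real \<Rightarrow> real) \<Rightarrow> 'a::euclidean_space \<Rightarrow> real" where
  "rho_kernel \<rho> z = \<rho> (norm z) / norm z ^ DIM('a)"

lemma I_rho_eq_convolution: "I_rho \<rho> f x = (\<integral> y. rho_kernel \<rho> (x - y) * f y \<partial>lebesgue)"
  unfolding I_rho_def rho_kernel_def ..

lemma rho_kernel_nonneg:
  assumes "\<And>t. t > 0 \<Longrightarrow> 0 \<le> \<rho> t"
  shows "0 \<le> rho_kernel \<rho> z"
  using assms[of "norm z"] by (cases "z = 0") (simp_all add: rho_kernel_def power_0_left)

lemma borel_measurable_rho_kernel:
  assumes "set_borel_measurable lborel {0<..} \<rho>"
  shows "(rho_kernel \<rho> :: 'a::euclidean_space \<Rightarrow> real) \<in> borel_measurable borel"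
proof -
  have [measurable]: "(\<lambda>t. indicator {0<..} t * \<rho> t) \<in> borel_measurable borel"
    using assms unfolding set_borel_measurable_def by simp
  have "rho_kernel \<rho> = (\<lambda>z::'a. indicator {0<..} (norm z) * \<rho> (norm z) / norm z ^ DIM('a))"
    by (rule ext) (simp add: rho_kernel_def split: split_indicator)
  then show ?thesis by simp
qed

lemma borel_measurable_lebesgue_convolution:
  fixes k f :: "'a::euclidean_space \<Rightarrow> real"
  assumes k[measurable]: "k \<in> borel_measurable borel" and f: "f \<in> borel_measurable lebesgue"
  shows "(\<lambda>x. \<integral> y. k (x - y) * f y \<partial>lebesgue) \<in> borel_measurable lebesgue"
proof -
  obtain f' where f'[measurable]: "f' \<in> borel_measurable lborel" and ff': "AE y in lborel. f y = f' y"
    using completion_ex_borel_measurable_real[OF f] by blast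
  have "(\<integral> y. k (x - y) * f y \<partial>lebesgue) = (\<integral> y. k (x - y) * f' y \<partial>lborel)" for x
  proof -
    have "(\<integral> y. k (x - y) * f y \<partial>lebesgue) = (\<integral> y. k (x - y) * f' y \<partial>lebesgue)"
    proof (rule integral_cong_AE)
      show "(\<lambda>y. k (x - y) * f y) \<in> borel_measurable lebesgue"
        using f by (intro borel_measurable_times[OF measurable_completion]) simp_all
      show "(\<lambda>y. k (x - y) * f' y) \<in> borel_measurable lebesgue"
        by (intro measurable_completion) simp
      show "AE y in lebesgue. k (x - y) * f y = k (x - y) * f' y"
        using AE_completion[OF ff'] by eventually_elim simp
    qed
    also have "\<dots> = (\<integral> y. k (x - y) * f' y \<partial>lborel)"
      by (intro integral_completion) simp
    finally show ?thesis .
  qed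
  moreover have "(\<lambda>x. \<integral> y. k (x - y) * f' y \<partial>lborel) \<in> borel_measurable lborel"
    by (intro lborel.borel_measurable_lebesgue_integral) simp
  ultimately show ?thesis by (simp add: measurable_completion)
qed

lemma abs_convolution_le_ball:
  fixes k f :: "'a::euclidean_space \<Rightarrow> real"
  assumes k[measurable]: "k \<in> borel_measurable borel" and k_nonneg: "\<And>z. 0 \<le> k z"
    and M: "\<And>y. \<bar>f y\<bar> \<le> M" and R: "\<And>y. f y \<noteq> 0 \<Longrightarrow> norm y < R"
  shows "ennreal \<bar>\<integral> y. k (x - y) * f y \<partial>lebesgue\<bar> \<le> ennreal M * (\<integral>\<^sup>+ y\<in>ball 0 R. ennreal (k (x - y)) \<partial>lborel)"
proof (cases "integrable lebesgue (\<lambda>y. k (x - y) * f y)")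
  case False
  then show ?thesis by (simp add: not_integrable_integral_eq)
next
  case True
  have [measurable]: "ball (0::'a) R \<in> sets borel" by simp
  have "ennreal \<bar>\<integral> y. k (x - y) * f y \<partial>lebesgue\<bar> \<le> (\<integral>\<^sup>+ y. norm (k (x - y) * f y) \<partial>lebesgue)"
    using integral_norm_bound_ennreal[OF True] by simp
  also have "\<dots> \<le> (\<integral>\<^sup>+ y. ennreal M * (ennreal (k (x - y)) * indicator (ball 0 R) y) \<partial>lebesgue)"
  proof (rule nn_integral_mono)
    fix y
    have "k (x - y) * \<bar>f y\<bar> \<le> M * (k (x - y) * indicator (ball 0 R) y)"
      using M[of y] R[of y] k_nonneg[of "x - y"]
      by (cases "f y = 0") (auto simp: mult.commute intro: mult_right_mono split: split_indicator)
    then show "ennreal (norm (k (x - y) * f y)) \<le> ennreal M * (ennreal (k (x - y)) * indicator (ball 0 R) y)"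
      using k_nonneg[of "x - y"] M[of y] R[of y]
      by (auto simp: abs_mult ennreal_mult[symmetric] intro!: ennreal_leI split: split_indicator)
  qed
  also have "\<dots> = (\<integral>\<^sup>+ y. ennreal M * (ennreal (k (x - y)) * indicator (ball 0 R) y) \<partial>lborel)"
    by (rule nn_integral_completion) measurable
  also have "\<dots> = ennreal M * (\<integral>\<^sup>+ y\<in>ball 0 R. ennreal (k (x - y)) \<partial>lborel)"
    by (rule nn_integral_cmult) measurable
  finally show ?thesis .
qed

lemma nn_integral_ball_translate_le:
  fixes F :: "'a::euclidean_space \<Rightarrow> ennreal"
  assumes [measurable]: "F \<in> borel_measurable borel" and x: "norm x < r"
  shows "(\<integral>\<^sup>+ y\<in>ball 0 R. F (x - y) \<partial>lborel) \<le> (\<integral>\<^sup>+ z\<in>ball 0 (R + r). F z \<partial>lborel)"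
proof -
  have [measurable]: "ball (0::'a) (R + r) \<in> sets borel" by simp
  have reflect: "distr lborel borel (\<lambda>y. x - y) = (lborel :: 'a measure)"
    using lborel_affine[of "-1" x] by (simp add: density_1)
  have "(\<integral>\<^sup>+ y\<in>ball 0 R. F (x - y) \<partial>lborel) \<le> (\<integral>\<^sup>+ y. F (x - y) * indicator (ball 0 (R + r)) (x - y) \<partial>lborel)"
  proof (rule nn_integral_mono)
    fix y :: 'a
    have "norm y < R \<Longrightarrow> norm (x - y) < R + r" using x norm_triangle_ineq4[of x y] by simp
    then show "F (x - y) * indicator (ball 0 R) y \<le> F (x - y) * indicator (ball 0 (R + r)) (x - y)"
      by (auto split: split_indicator)
  qed
  also have "\<dots> = (\<integral>\<^sup>+ z\<in>ball 0 (R + r). F z \<partial>distr lborel borel (\<lambda>y. x - y))"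
    by (subst nn_integral_distr) auto
  finally show ?thesis unfolding reflect .
qed

lemma nn_integral_rho_kernel_ball_le:
  assumes \<rho>_meas: "set_borel_measurable lborel {0<..} \<rho>" and \<rho>_nonneg: "\<And>t. t > 0 \<Longrightarrow> 0 \<le> \<rho> t"
  shows "(\<integral>\<^sup>+ z\<in>ball (0::'a::euclidean_space) T. ennreal (rho_kernel \<rho> z) \<partial>lborel)
    \<le> ennreal (real DIM('a) * measure lborel (ball (0::'a) 1)) * rho_star_nn \<rho> T"
proof -
  define n where "n = DIM('a)"
  define c where "c = real n * measure lborel (ball (0::'a) 1)"
  have n1: "n \<ge> 1" unfolding n_def using DIM_positive by (simp add: Suc_le_eq)
  have c: "c \<ge> 0" unfolding c_def by simp
  define \<rho>' where "\<rho>' = (\<lambda>t. indicator {0<..} t * \<rho> t)"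
  have [measurable]: "\<rho>' \<in> borel_measurable borel"
    using \<rho>_meas unfolding set_borel_measurable_def \<rho>'_def by simp
  define F where "F = (\<lambda>t. ennreal (\<rho>' t / t ^ n) * indicator {..<T} t)"
  have [measurable]: "F \<in> borel_measurable borel" unfolding F_def by measurable
  have "(\<integral>\<^sup>+ z\<in>ball (0::'a) T. ennreal (rho_kernel \<rho> z) \<partial>lborel) = (\<integral>\<^sup>+ z. F (norm (z::'a)) \<partial>lborel)"
    unfolding F_def rho_kernel_def n_def \<rho>'_def
    by (intro nn_integral_cong) (auto simp: power_0_left split: split_indicator)
  also have "\<dots> = (\<integral>\<^sup>+ t. ennreal (c * t ^ (n - 1)) * indicator {0<..} t * F t \<partial>lborel)"
    unfolding c_def n_def by (rule nn_integral_radial) measurable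
  also have "\<dots> \<le> (\<integral>\<^sup>+ t. ennreal c * (ennreal (\<rho>' t / t) * indicator {0<..T} t) \<partial>lborel)"
  proof (rule nn_integral_mono)
    fix t :: real
    show "ennreal (c * t ^ (n - 1)) * indicator {0<..} t * F t \<le> ennreal c * (ennreal (\<rho>' t / t) * indicator {0<..T} t)"
    proof (cases "0 < t \<and> t < T")
      case True
      have "c * t ^ (n - 1) * (\<rho>' t / t ^ n) = c * (\<rho>' t / t)"
        using True n1 by (cases n) (simp_all add: field_simps)
      then show ?thesis
        using True c \<rho>_nonneg[of t] unfolding F_def \<rho>'_def by (simp add: ennreal_mult[symmetric])
    qed (auto simp: F_def split: split_indicator)
  qed
  also have "\<dots> = ennreal c * (\<integral>\<^sup>+ t. ennreal (\<rho>' t / t) * indicator {0<..T} t \<partial>lborel)"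
    by (rule nn_integral_cmult) measurable
  also have "\<dots> = ennreal c * rho_star_nn \<rho> T"
    unfolding rho_star_nn_def \<rho>'_def
    by (intro arg_cong[where f="(*) (ennreal c)"] nn_integral_cong) (simp split: split_indicator)
  finally show ?thesis unfolding c_def n_def .
qed

lemma rho_kernel_le_far:
  fixes z :: "'a::euclidean_space"
  assumes \<rho>_nonneg: "\<And>t. t > 0 \<Longrightarrow> 0 \<le> \<rho> t"
    and \<rho>_le: "\<And>t. t > 0 \<Longrightarrow> ennreal (\<rho> t) \<le> ennreal C * rho_star_nn \<rho> (K * t)"
    and K: "K > 0" and a: "a > 0" and z: "a / 2 \<le> norm z" "norm z \<le> 2 * a"
  shows "ennreal (rho_kernel \<rho> z) \<le> ennreal ((2 / a) ^ DIM('a)) * (ennreal C * rho_star_nn \<rho> (2 * K * a))"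
proof -
  define d where "d = norm z"
  have d: "d > 0" using z a unfolding d_def by linarith
  have "rho_kernel \<rho> z \<le> \<rho> d * (2 / a) ^ DIM('a)"
  proof -
    have "(a / 2) ^ DIM('a) \<le> d ^ DIM('a)" using z a unfolding d_def by (intro power_mono) auto
    then have "1 / d ^ DIM('a) \<le> 1 / (a / 2) ^ DIM('a)" using a d by (intro divide_left_mono) auto
    then have "1 / d ^ DIM('a) \<le> (2 / a) ^ DIM('a)" by (simp add: power_divide)
    then show ?thesis
      using \<rho>_nonneg[OF d] unfolding rho_kernel_def d_def[symmetric] by (simp add: divide_inverse mult_left_mono)
  qed
  then have "ennreal (rho_kernel \<rho> z) \<le> ennreal ((2 / a) ^ DIM('a)) * ennreal (\<rho> d)"
    using a \<rho>_nonneg[OF d] by (simp add: ennreal_mult[symmetric] ennreal_leI mult.commute)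
  also have "\<dots> \<le> ennreal ((2 / a) ^ DIM('a)) * (ennreal C * rho_star_nn \<rho> (2 * K * a))"
  proof (rule mult_left_mono)
    have "rho_star_nn \<rho> (K * d) \<le> rho_star_nn \<rho> (2 * K * a)"
      using z K unfolding d_def by (intro rho_star_nn_mono) simp
    then show "ennreal (\<rho> d) \<le> ennreal C * rho_star_nn \<rho> (2 * K * a)"
      using \<rho>_le[OF d] by (meson mult_left_mono order_trans zero_le)
  qed simp
  finally show ?thesis .
qed

lemma nn_integral_rho_kernel_ball_far:
  fixes x :: "'a::euclidean_space"
  assumes \<rho>_nonneg: "\<And>t. t > 0 \<Longrightarrow> 0 \<le> \<rho> t"
    and \<rho>_le: "\<And>t. t > 0 \<Longrightarrow> ennreal (\<rho> t) \<le> ennreal C * rho_star_nn \<rho> (K * t)"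
    and C: "C \<ge> 0" and K: "K > 0" and R: "R > 0" and x: "2 * R \<le> norm x"
  shows "(\<integral>\<^sup>+ y\<in>ball 0 R. ennreal (rho_kernel \<rho> (x - y)) \<partial>lborel)
    \<le> ennreal (C * (4 * K) ^ DIM('a) * measure lborel (ball (0::'a) R))
       * (ennreal (1 / (2 * K * norm x) ^ DIM('a)) * rho_star_nn \<rho> (2 * K * norm x))"
proof -
  define n where "n = DIM('a)"
  define a where "a = norm x"
  define bound where "bound = ennreal ((2 / a) ^ n) * (ennreal C * rho_star_nn \<rho> (2 * K * a))"
  have a: "a > 0" "2 * R \<le> a" using x R unfolding a_def by auto
  have "ennreal (rho_kernel \<rho> (x - y)) \<le> bound" if y: "norm y < R" for y
  proof -
    have "a - norm y \<le> norm (x - y)" "norm (x - y) \<le> a + norm y"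
      using norm_triangle_ineq2[of x y] norm_triangle_ineq4[of x y] unfolding a_def by auto
    then show ?thesis
      unfolding bound_def n_def using y a by (intro rho_kernel_le_far[OF \<rho>_nonneg \<rho>_le K]) auto
  qed
  then have "(\<integral>\<^sup>+ y\<in>ball 0 R. ennreal (rho_kernel \<rho> (x - y)) \<partial>lborel)
      \<le> (\<integral>\<^sup>+ y. bound * indicator (ball 0 R) (y::'a) \<partial>lborel)"
    by (intro nn_integral_mono) (simp split: split_indicator)
  also have "\<dots> = bound * ennreal (measure lborel (ball (0::'a) R))"
    using emeasure_lborel_ball_finite[of "0::'a" R]
    by (simp add: nn_integral_cmult_indicator emeasure_eq_ennreal_measure)
  also have "\<dots> = ennreal (C * (4 * K) ^ n * measure lborel (ball (0::'a) R))
       * (ennreal (1 / (2 * K * a) ^ n) * rho_star_nn \<rho> (2 * K * a))"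
  proof -
    have "2 / a = 4 * K * (1 / (2 * K * a))" using a K by (simp add: field_simps)
    then have "(2 / a) ^ n = (4 * K) ^ n * (1 / (2 * K * a) ^ n)"
      by (simp only: power_mult_distrib power_one_over)
    moreover have "0 \<le> (4 * K) ^ n" using K by simp
    ultimately have "ennreal ((2 / a) ^ n) = ennreal ((4 * K) ^ n) * ennreal (1 / (2 * K * a) ^ n)"
      by (simp only: ennreal_mult')
    moreover have "ennreal (C * (4 * K) ^ n * measure lborel (ball (0::'a) R))
        = ennreal C * ennreal ((4 * K) ^ n) * ennreal (measure lborel (ball (0::'a) R))"
      using C K by (simp add: ennreal_mult)
    ultimately show ?thesis unfolding bound_def by (simp only: mult_ac)
  qed
  finally show ?thesis unfolding a_def n_def .
qed

lemma compact_support_in_ball: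
  assumes "compact (closure {x. f x \<noteq> 0})"
  obtains R :: real where "R > 0" "\<And>x. f x \<noteq> 0 \<Longrightarrow> norm x < R"
proof -
  have "bounded {x. f x \<noteq> 0}"
    using compact_imp_bounded[OF assms] closure_subset bounded_subset by blast
  then obtain b where "b > 0" "\<And>x. f x \<noteq> 0 \<Longrightarrow> norm x \<le> b" unfolding bounded_pos by auto
  then show ?thesis using that[of "b + 1"] by fastforce
qed

lemma abs_I_rho_le_near:
  fixes f :: "'a::euclidean_space \<Rightarrow> real"
  assumes \<rho>_meas: "set_borel_measurable lborel {0<..} \<rho>" and \<rho>_nonneg: "\<And>t. t > 0 \<Longrightarrow> 0 \<le> \<rho> t"
    and M: "\<And>y. \<bar>f y\<bar> \<le> M" and R: "\<And>y. f y \<noteq> 0 \<Longrightarrow> norm y < R" and x: "norm x < r"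
  shows "ennreal \<bar>I_rho \<rho> f x\<bar>
    \<le> ennreal M * (ennreal (real DIM('a) * measure lborel (ball (0::'a) 1)) * rho_star_nn \<rho> (R + r))"
proof -
  have k: "rho_kernel \<rho> \<in> borel_measurable borel" "\<And>z. 0 \<le> rho_kernel \<rho> z"
    using borel_measurable_rho_kernel[OF \<rho>_meas] rho_kernel_nonneg[OF \<rho>_nonneg] by auto
  have "ennreal \<bar>I_rho \<rho> f x\<bar> \<le> ennreal M * (\<integral>\<^sup>+ y\<in>ball 0 R. ennreal (rho_kernel \<rho> (x - y)) \<partial>lborel)"
    unfolding I_rho_eq_convolution by (rule abs_convolution_le_ball[OF k M R])
  also have "\<dots> \<le> ennreal M * (\<integral>\<^sup>+ z\<in>ball (0::'a) (R + r). ennreal (rho_kernel \<rho> z) \<partial>lborel)"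
    using k(1) x by (intro mult_left_mono nn_integral_ball_translate_le zero_le) measurable
  also have "\<dots> \<le> ennreal M * (ennreal (real DIM('a) * measure lborel (ball (0::'a) 1)) * rho_star_nn \<rho> (R + r))"
    by (intro mult_left_mono nn_integral_rho_kernel_ball_le[OF \<rho>_meas \<rho>_nonneg] zero_le)
  finally show ?thesis .
qed

lemma abs_I_rho_le_far:
  fixes f :: "'a::euclidean_space \<Rightarrow> real"
  assumes \<rho>_meas: "set_borel_measurable lborel {0<..} \<rho>" and \<rho>_nonneg: "\<And>t. t > 0 \<Longrightarrow> 0 \<le> \<rho> t"
    and \<rho>_le: "\<And>t. t > 0 \<Longrightarrow> ennreal (\<rho> t) \<le> ennreal C * rho_star_nn \<rho> (K * t)"
    and C: "C \<ge> 0" and K: "K > 0"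
    and M: "\<And>y. \<bar>f y\<bar> \<le> M" and R: "R > 0" "\<And>y. f y \<noteq> 0 \<Longrightarrow> norm y < R" and x: "2 * R \<le> norm x"
  shows "ennreal \<bar>I_rho \<rho> f x\<bar> \<le> ennreal M * (ennreal (C * (4 * K) ^ DIM('a) * measure lborel (ball (0::'a) R))
       * (ennreal (1 / (2 * K * norm x) ^ DIM('a)) * rho_star_nn \<rho> (2 * K * norm x)))"
proof -
  have k: "rho_kernel \<rho> \<in> borel_measurable borel" "\<And>z. 0 \<le> rho_kernel \<rho> z"
    using borel_measurable_rho_kernel[OF \<rho>_meas] rho_kernel_nonneg[OF \<rho>_nonneg] by auto
  have "ennreal \<bar>I_rho \<rho> f x\<bar> \<le> ennreal M * (\<integral>\<^sup>+ y\<in>ball 0 R. ennreal (rho_kernel \<rho> (x - y)) \<partial>lborel)"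
    unfolding I_rho_eq_convolution by (rule abs_convolution_le_ball[OF k M R(2)])
  also have "\<dots> \<le> ennreal M * (ennreal (C * (4 * K) ^ DIM('a) * measure lborel (ball (0::'a) R))
       * (ennreal (1 / (2 * K * norm x) ^ DIM('a)) * rho_star_nn \<rho> (2 * K * norm x)))"
    by (intro mult_left_mono nn_integral_rho_kernel_ball_far[OF \<rho>_nonneg \<rho>_le C K R(1) x] zero_le)
  finally show ?thesis .
qed

lemma I_rho_in_LPsi:
  fixes f :: "'a::euclidean_space \<Rightarrow> real"
  assumes \<rho>_meas: "set_borel_measurable lborel {0<..} \<rho>" and \<rho>_nonneg: "\<And>t. t > 0 \<Longrightarrow> 0 \<le> \<rho> t"
    and \<rho>_le: "\<And>t. t > 0 \<Longrightarrow> ennreal (\<rho> t) \<le> ennreal C * rho_star_nn \<rho> (K * t)"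
    and C: "C \<ge> 0" and K: "K > 0" and finite: "\<And>r. r > 0 \<Longrightarrow> rho_star_nn \<rho> r < \<infinity>"
    and decay: "\<And>s. s \<ge> \<sigma> \<Longrightarrow> ennreal (1 / s ^ DIM('a)) * rho_star_nn \<rho> s
      \<le> ennreal (D * (1 / s ^ DIM('a)) powr (1 - q)) * ginv \<Psi> (ennreal (1 / s ^ DIM('a)))"
    and D: "D \<ge> 0" and q: "q < 1" and \<Psi>: "\<Psi> \<in> Nabla2" and f: "f \<in> borel_measurable lebesgue"
    and M: "\<And>y. \<bar>f y\<bar> \<le> M" and R: "R > 0" "\<And>y. f y \<noteq> 0 \<Longrightarrow> norm y < R"
  shows "I_rho \<rho> f \<in> LPsi \<Psi>"
proof -
  have "M \<ge> 0" using M[of 0] by linarith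
  define r0 where "r0 = max (2 * R) (\<sigma> / (2 * K))"
  have r0: "r0 > 0" using R unfolding r0_def by simp
  obtain P where P: "rho_star_nn \<rho> (R + r0) = ennreal P" "P \<ge> 0"
    using finite[of "R + r0"] R r0 by (cases "rho_star_nn \<rho> (R + r0)") auto
  define c where "c = real DIM('a) * measure lborel (ball (0::'a) 1)"
  define C1 where "C1 = C * (4 * K) ^ DIM('a) * measure lborel (ball (0::'a) R)"
  have c: "c \<ge> 0" and C1: "C1 \<ge> 0" unfolding c_def C1_def using C K by simp_all
  have near: "\<bar>I_rho \<rho> f x\<bar> \<le> M * (c * P)" if x: "norm x < r0" for x
  proof -
    have "ennreal \<bar>I_rho \<rho> f x\<bar> \<le> ennreal (M * (c * P))"
      using abs_I_rho_le_near[where f = f and M = M and R = R, OF \<rho>_meas \<rho>_nonneg M R(2) x] \<open>M \<ge> 0\<close> c P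
      unfolding c_def by (simp add: ennreal_mult)
    then show ?thesis using \<open>M \<ge> 0\<close> c P by (simp add: ennreal_le_iff)
  qed
  have far: "ennreal \<bar>I_rho \<rho> f x\<bar> \<le> ennreal (M * C1 * D * (1 / (2 * K * norm x) ^ DIM('a)) powr (1 - q))
      * ginv \<Psi> (ennreal (1 / (2 * K * norm x) ^ DIM('a)))" if x: "r0 \<le> norm x" for x
  proof -
    define u where "u = 1 / (2 * K * norm x) ^ DIM('a)"
    have "2 * R \<le> norm x" "\<sigma> \<le> 2 * K * norm x"
      using x K unfolding r0_def by (auto simp: field_simps)
    have "ennreal \<bar>I_rho \<rho> f x\<bar> \<le> ennreal M * (ennreal C1 * (ennreal u * rho_star_nn \<rho> (2 * K * norm x)))"
      unfolding C1_def u_def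
      by (rule abs_I_rho_le_far[where f = f and M = M and R = R, OF \<rho>_meas \<rho>_nonneg \<rho>_le C K M R])
        (use \<open>2 * R \<le> norm x\<close> in auto)
    also have "\<dots> \<le> ennreal M * (ennreal C1 * (ennreal (D * u powr (1 - q)) * ginv \<Psi> (ennreal u)))"
      using decay[OF \<open>\<sigma> \<le> 2 * K * norm x\<close>] unfolding u_def by (intro mult_left_mono) auto
    also have "\<dots> = ennreal (M * C1 * D * u powr (1 - q)) * ginv \<Psi> (ennreal u)"
      using \<open>M \<ge> 0\<close> C1 D by (simp add: ennreal_mult mult_ac)
    finally show ?thesis unfolding u_def by (simp add: mult.assoc)
  qed
  have "I_rho \<rho> f \<in> borel_measurable lebesgue"
    unfolding I_rho_eq_convolution[abs_def]
    using borel_measurable_rho_kernel[OF \<rho>_meas] f by (rule borel_measurable_lebesgue_convolution)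
  then show ?thesis
    by (rule LPsi_of_decay[OF _ \<Psi> q _ r0 _ near far]) (use K \<open>M \<ge> 0\<close> C1 D in auto)
qed

theorem lemma7p1:
  fixes \<rho> \<psi> :: "real \<Rightarrow> real"
    and \<Phi> \<Psi> :: "ennreal \<Rightarrow> ennreal"
    and f :: "'a::euclidean_space \<Rightarrow> real"
  assumes rho_pos: "\<forall>t>0. \<rho> t > 0"
    and psi_pos: "\<forall>t>0. \<psi> t > 0"
    and rho_meas: "set_borel_measurable lborel {0<..} \<rho>"
    and rho_int: "(\<integral>\<^sup>+ t\<in>{0<..1}. ennreal (\<rho> t / t) \<partial>lborel) < \<infinity>"
    and standing: "\<exists>C K1 K2. C > 0 \<and> 0 < K1 \<and> K1 < K2 \<and>
        (\<forall>r>0. \<forall>t\<in>{r..2*r}. ennreal (\<rho> t) \<le>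
            ennreal C * (\<integral>\<^sup>+ s\<in>{K1*r..K2*r}. ennreal (\<rho> s / s) \<partial>lborel))"
    and Phi: "\<Phi> \<in> PbarY \<inter> Delta2 \<inter> Nabla2"
    and Psi: "\<Psi> \<in> PbarY \<inter> Delta2 \<inter> Nabla2"
    and psi_ai: "almost_increasing \<psi>"
    and rho_ad: "\<exists>\<epsilon>. 0 < \<epsilon> \<and> \<epsilon> < real DIM('a) \<and>
        almost_decreasing (\<lambda>r. \<rho> r / r powr (real DIM('a) - \<epsilon>))"
    and Theta: "\<exists>A::real. \<exists>\<Theta>. A > 0 \<and> \<Theta> \<in> Nabla2 \<and>
        (\<forall>r>0. (\<integral>\<^sup>+ t\<in>{0<..r}. ennreal (\<rho> t / t) \<partial>lborel)
                  * ginv \<Phi> (ennreal (1 / r ^ DIM('a)))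
               + (\<integral>\<^sup>+ t\<in>{r<..}. ennreal (\<rho> t / t) * ginv \<Phi> (ennreal (1 / t ^ DIM('a))) \<partial>lborel)
               \<le> ennreal A * ginv \<Theta> (ennreal (1 / r ^ DIM('a)))) \<and>
        (\<forall>r>0. ennreal (\<psi> r) * ginv \<Theta> (ennreal (1 / r ^ DIM('a)))
               \<le> ennreal A * ginv \<Psi> (ennreal (1 / r ^ DIM('a))))"
    and rho_lip: "\<exists>C\<rho>>0. \<forall>r s. 0 < r \<and> 0 < s \<and> 1/2 \<le> r / s \<and> r / s \<le> 2 \<longrightarrow>
        \<bar>\<rho> r / r ^ DIM('a) - \<rho> s / s ^ DIM('a)\<bar>
          \<le> C\<rho> * \<bar>r - s\<bar> * rho_star \<rho> r / r ^ (DIM('a) + 1)"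
    and f_meas: "f \<in> borel_measurable lebesgue"
    and f_bdd: "bounded (range f)"
    and f_supp: "compact (closure {x. f x \<noteq> 0})"
  shows "I_rho \<rho> f \<in> LPsi \<Psi>"
proof -
  obtain Cs K1 K2 where Cs: "Cs > 0" and K12: "0 < K1" "K1 < K2" and std: "\<forall>r>0. \<forall>t\<in>{r..2*r}.
      ennreal (\<rho> t) \<le> ennreal Cs * (\<integral>\<^sup>+ s\<in>{K1*r..K2*r}. ennreal (\<rho> s / s) \<partial>lborel)"
    using standing by blast
  obtain A \<Theta> where A: "A > 0" and \<Theta>: "\<Theta> \<in> Nabla2" and T1: "\<forall>r>0.
      (\<integral>\<^sup>+ t\<in>{0<..r}. ennreal (\<rho> t / t) \<partial>lborel) * ginv \<Phi> (ennreal (1 / r ^ DIM('a)))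
      + (\<integral>\<^sup>+ t\<in>{r<..}. ennreal (\<rho> t / t) * ginv \<Phi> (ennreal (1 / t ^ DIM('a))) \<partial>lborel)
      \<le> ennreal A * ginv \<Theta> (ennreal (1 / r ^ DIM('a)))"
    and T2: "\<And>r. r > 0 \<Longrightarrow> ennreal (\<psi> r) * ginv \<Theta> (ennreal (1 / r ^ DIM('a)))
      \<le> ennreal A * ginv \<Psi> (ennreal (1 / r ^ DIM('a)))"
    using Theta by blast
  have \<Phi>\<Theta>: "rho_star_nn \<rho> r * ginv \<Phi> (ennreal (1 / r ^ DIM('a))) \<le> ennreal A * ginv \<Theta> (ennreal (1 / r ^ DIM('a)))"
    if "r > 0" for r
    unfolding rho_star_nn_def by (rule order_trans[OF add_increasing2[OF zero_le order_refl] T1[rule_format, OF that]])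
  have \<Phi>N: "\<Phi> \<in> Nabla2" and \<Psi>N: "\<Psi> \<in> Nabla2" using Phi Psi by auto
  obtain D q s0 where D: "D \<ge> 0" and q: "q < 1" and decay: "\<And>s. s \<ge> s0 \<Longrightarrow>
      ennreal (1 / s ^ DIM('a)) * rho_star_nn \<rho> s
      \<le> ennreal (D * (1 / s ^ DIM('a)) powr (1 - q)) * ginv \<Psi> (ennreal (1 / s ^ DIM('a)))"
    using rho_star_nn_le_ginv[OF DIM_ge_Suc0[folded One_nat_def] A \<Phi>N psi_pos psi_ai \<Phi>\<Theta> T2] by blast
  obtain M where M: "M > 0" "\<And>x. \<bar>f x\<bar> \<le> M" using f_bdd unfolding bounded_pos by auto
  obtain R where R: "R > 0" "\<And>x. f x \<noteq> 0 \<Longrightarrow> norm x < R" using compact_support_in_ball[OF f_supp] by blast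
  have \<rho>_nonneg: "\<And>t. t > 0 \<Longrightarrow> 0 \<le> \<rho> t" using rho_pos by (simp add: less_imp_le)
  have finite: "rho_star_nn \<rho> r < \<infinity>" if "r > 0" for r
    by (rule rho_star_nn_less_top[OF Nabla2_Pbar[OF \<Phi>N] Nabla2_Pbar[OF \<Theta>] that \<Phi>\<Theta>[OF that]])
  have "Cs \<ge> 0" "K2 > 0" using Cs K12 by simp_all
  then show ?thesis
    using I_rho_in_LPsi[where \<rho> = \<rho> and f = f and M = M and R = R and \<sigma> = s0,
        OF rho_meas \<rho>_nonneg rho_le_rho_star_nn[OF K12(1) std] _ _ finite decay D q \<Psi>N f_meas M(2) R]
    by blast
qed

end
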